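(* Let $X$ be a Banach algebra. Let $\phi,\psi:X^2\to[0,\infty)$ and $f:X\to X$ with $f(0)=0$ satisfy $$\|f(xyx)-f(x)yx-xf(y)x-xyf(x)\|\le\psi(x,y),$$ $$\|f(2x+y)+f(x+2y)-f(3x)-f(3y)\|\le\phi(x,y)$$ for all $x,y\in X$. Assume there exists $0<L<1$ such that for all $x,y\in X$ $$\tfrac12\phi(2x,2y)\le L\phi(x,y),\qquad \lim_{k\to\infty}8^{-k}\psi(2^kx,2^ky)=0.$$ Then there exists a unique Jordan triple derivation $H:X\to X$ such that $$\|f(x)-H(x)\|\le\frac{1}{2-2L}\Phi(x)\quad\text{for all }x\in X,$$ where $\Phi(x)=\phi(\tfrac x2,0)+\phi(-\tfrac x2,0)+\phi(\tfrac x2,-\tfrac x2)+\phi(-\tfrac x3,\tfrac{2x}{3})$.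
   Context: A Jordan triple derivation on an algebra $X$ is an additive map $D:X\to X$ with $D(xyx)=D(x)yx+xD(y)x+xyD(x)$ for all $x,y\in X$. *)

theory Defs
  imports "HOL-Analysis.Analysis"
begin

definition additive_map :: "('a::ab_group_add \<Rightarrow> 'a) \<Rightarrow> bool" where
  "additive_map D \<longleftrightarrow> (\<forall>x y. D (x + y) = D x + D y)"

definition jordan_triple_derivation :: "('a::ring \<Rightarrow> 'a) \<Rightarrow> bool" where
  "jordan_triple_derivation D \<longleftrightarrow> additive_map D \<and>
     (\<forall>x y. D (x * y * x) = D x * y * x + x * D y * x + x * y * D x)"

end

theory Submission
  imports Defs
begin

text \<open>
  Direct method of Hyers. The doubling defect \<open>2 f x - f (2x)\<close> is bounded by \<open>\<Phi> x\<close>, and \<open>\<Phi>\<close> grows at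
  most by the factor \<open>2L\<close> under doubling, so \<open>2\<^sup>-\<^sup>n f (2\<^sup>n x)\<close> is Cauchy with increments of size
  \<open>L\<^sup>n \<Phi> x / 2\<close>; its limit \<open>H\<close> lies within \<open>\<Phi> x / (2 - 2L)\<close> of \<open>f\<close>. The same rescaling kills the
  right-hand side of the Cauchy-type inequality, so \<open>H\<close> solves the Cauchy-type equation and is
  additive; rescaling \<open>x, y\<close> by \<open>2\<^sup>k\<close> scales \<open>xyx\<close> by \<open>8\<^sup>k\<close>, which kills the Jordan defect.
  Two additive maps at distance \<open>O(\<Phi>)\<close> agree, because their difference is homogeneous under
  doubling while \<open>\<Phi>\<close> grows only by \<open>2L < 2\<close>.
\<close>

lemma pow2_scaleR_le:
  fixes g :: "'a::real_vector \<Rightarrow> real"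
  assumes double: "\<And>x. g (2 *\<^sub>R x) \<le> c * g x" and "0 \<le> c"
  shows "g ((2::real) ^ n *\<^sub>R x) \<le> c ^ n * g x"
proof (induction n)
  case 0
  then show ?case by simp
next
  case (Suc n)
  have "g ((2::real) ^ Suc n *\<^sub>R x) = g (2 *\<^sub>R (2 ^ n *\<^sub>R x))" by simp
  also have "\<dots> \<le> c * g (2 ^ n *\<^sub>R x)" by (rule double)
  also have "\<dots> \<le> c * (c ^ n * g x)" using Suc \<open>0 \<le> c\<close> by (rule mult_left_mono)
  finally show ?case by simp
qed

lemma additive_map_scaleR_pow2:
  fixes G :: "'a::real_vector \<Rightarrow> 'a"
  assumes "additive_map G"
  shows "G ((2::real) ^ n *\<^sub>R x) = (2::real) ^ n *\<^sub>R G x"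
proof (induction n)
  case 0
  then show ?case by simp
next
  case (Suc n)
  have "G ((2::real) ^ Suc n *\<^sub>R x) = G (2 ^ n *\<^sub>R x + 2 ^ n *\<^sub>R x)"
    by (simp add: scaleR_2 flip: scaleR_scaleR)
  also have "\<dots> = 2 ^ n *\<^sub>R G x + 2 ^ n *\<^sub>R G x"
    using assms Suc by (simp add: additive_map_def)
  also have "\<dots> = (2::real) ^ Suc n *\<^sub>R G x"
    by (simp add: scaleR_2 flip: scaleR_scaleR)
  finally show ?case .
qed

lemma additive_maps_eq_if_near:
  fixes f G H :: "'a::real_normed_vector \<Rightarrow> 'a"
  assumes "additive_map G" "additive_map H"
    and near_G: "\<And>x. norm (f x - G x) \<le> M x" and near_H: "\<And>x. norm (f x - H x) \<le> M x"
    and M_double: "\<And>x. M (2 *\<^sub>R x) \<le> 2 * L * M x"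
    and "0 \<le> L" "L < 1"
  shows "G = H"
proof
  fix x
  have "norm (G x - H x) \<le> L ^ n * (2 * M x)" for n
  proof -
    define y where "y = (2::real) ^ n *\<^sub>R x"
    have "2 ^ n * norm (G x - H x) = norm ((f y - H y) - (f y - G y))"
      by (simp add: y_def additive_map_scaleR_pow2[OF \<open>additive_map G\<close>]
          additive_map_scaleR_pow2[OF \<open>additive_map H\<close>] flip: scaleR_diff_right)
    also have "\<dots> \<le> 2 * M y"
      using norm_triangle_ineq4[of "f y - H y" "f y - G y"] near_G[of y] near_H[of y] by simp
    also have "\<dots> \<le> 2 * ((2 * L) ^ n * M x)"
      using pow2_scaleR_le[where g = M, OF M_double] \<open>0 \<le> L\<close> by (simp add: y_def)
    finally show ?thesis by (simp add: power_mult_distrib)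
  qed
  moreover have "(\<lambda>n. L ^ n * (2 * M x)) \<longlonglongrightarrow> 0"
    using assms by (intro tendsto_mult_left_zero LIMSEQ_power_zero) auto
  ultimately have "norm (G x - H x) \<le> 0"
    by (intro LIMSEQ_le_const) auto
  then show "G x = H x" by simp
qed

lemma additive_map_if_functional_eq:
  fixes H :: "'a::real_vector \<Rightarrow> 'a"
  assumes H2: "\<And>x. H (2 *\<^sub>R x) = 2 *\<^sub>R H x"
    and eq: "\<And>a b. H (2 *\<^sub>R a + b) + H (a + 2 *\<^sub>R b) - H (3 *\<^sub>R a) - H (3 *\<^sub>R b) = 0"
  shows "additive_map H"
proof -
  have sym_sum: "H a + H b = H (2 *\<^sub>R a - b) + H (2 *\<^sub>R b - a)" for a b
  proof -
    define a' where "a' = (2/3) *\<^sub>R a - (1/3) *\<^sub>R b"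
    define b' where "b' = (2/3) *\<^sub>R b - (1/3) *\<^sub>R a"
    have "2 *\<^sub>R a' + b' = a" "a' + 2 *\<^sub>R b' = b"
      unfolding a'_def b'_def by (simp_all add: algebra_simps flip: scaleR_add_left scaleR_diff_left)
    moreover have "3 *\<^sub>R a' = 2 *\<^sub>R a - b" "3 *\<^sub>R b' = 2 *\<^sub>R b - a"
      unfolding a'_def b'_def by (simp_all add: algebra_simps)
    ultimately show ?thesis using eq[of a' b'] by (simp only:) (simp add: algebra_simps)
  qed
  have shift: "H (x + 2 *\<^sub>R y) + H (x - y) = H x + H (x + y)" for x y
  proof -
    have "2 *\<^sub>R x - (x + y) = x - y" "2 *\<^sub>R (x + y) - x = x + 2 *\<^sub>R y"
      by (simp_all add: algebra_simps scaleR_2)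
    then show ?thesis using sym_sum[of x "x + y"] by (simp add: algebra_simps)
  qed
  have jensen: "H (x + y) + H (x - y) = 2 *\<^sub>R H x" for x y
  proof -
    have "H (x + y) + H (x - (1/2) *\<^sub>R y) = H x + H (x + (1/2) *\<^sub>R y)"
      "H (x - y) + H (x + (1/2) *\<^sub>R y) = H x + H (x - (1/2) *\<^sub>R y)"
      using shift[of x "(1/2) *\<^sub>R y"] shift[of x "- ((1/2) *\<^sub>R y)"] by simp_all
    then show ?thesis by (smt (verit) add.commute add_diff_cancel diff_add_eq scaleR_2)
  qed
  show ?thesis unfolding additive_map_def
  proof (intro allI)
    fix u v
    have "H u + H v = 2 *\<^sub>R H ((1/2) *\<^sub>R (u + v))"
      using jensen[of "(1/2) *\<^sub>R (u + v)" "(1/2) *\<^sub>R (u - v)"]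
      by (simp add: algebra_simps flip: scaleR_add_left scaleR_diff_left)
    also have "\<dots> = H (u + v)" using H2[of "(1/2) *\<^sub>R (u + v)"] by simp
    finally show "H (u + v) = H u + H v" by simp
  qed
qed

definition hyers_seq :: "('a::real_vector \<Rightarrow> 'b::real_vector) \<Rightarrow> nat \<Rightarrow> 'a \<Rightarrow> 'b" where
  "hyers_seq f n x = (1 / 2 ^ n) *\<^sub>R f (2 ^ n *\<^sub>R x)"

lemma hyers_seq_0 [simp]: "hyers_seq f 0 x = f x"
  by (simp add: hyers_seq_def)

lemma hyers_seq_double: "hyers_seq f n (2 *\<^sub>R x) = 2 *\<^sub>R hyers_seq f (Suc n) x"
  by (simp add: hyers_seq_def mult.commute)

lemma hyers_limit_double:
  fixes f :: "'a::real_vector \<Rightarrow> 'b::real_normed_vector"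
  assumes lim: "\<And>x. (\<lambda>n. hyers_seq f n x) \<longlonglongrightarrow> H x"
  shows "H (2 *\<^sub>R x) = 2 *\<^sub>R H x"
proof -
  have "(\<lambda>n. 2 *\<^sub>R hyers_seq f (Suc n) x) \<longlonglongrightarrow> 2 *\<^sub>R H x"
    using lim by (intro tendsto_scaleR tendsto_const LIMSEQ_Suc)
  then have "(\<lambda>n. hyers_seq f n (2 *\<^sub>R x)) \<longlonglongrightarrow> 2 *\<^sub>R H x"
    by (simp add: hyers_seq_double)
  then show ?thesis using lim LIMSEQ_unique by blast
qed

context
  fixes f :: "'a::real_vector \<Rightarrow> 'b::banach" and \<Phi> :: "'a \<Rightarrow> real" and L :: real
  assumes defect: "\<And>x. norm (2 *\<^sub>R f x - f (2 *\<^sub>R x)) \<le> \<Phi> x"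
    and \<Phi>_double: "\<And>x. \<Phi> (2 *\<^sub>R x) \<le> 2 * L * \<Phi> x"
    and L_nonneg: "0 \<le> L" and L_less_1: "L < 1"
begin

lemma norm_hyers_seq_Suc_diff_le:
  "norm (hyers_seq f (Suc n) x - hyers_seq f n x) \<le> L ^ n * \<Phi> x / 2"
proof -
  define y where "y = (2::real) ^ n *\<^sub>R x"
  have "hyers_seq f (Suc n) x - hyers_seq f n x = (1 / 2 ^ Suc n) *\<^sub>R (f (2 *\<^sub>R y) - 2 *\<^sub>R f y)"
    by (simp add: hyers_seq_def y_def algebra_simps)
  then have "norm (hyers_seq f (Suc n) x - hyers_seq f n x)
      = (1 / 2 ^ Suc n) * norm (2 *\<^sub>R f y - f (2 *\<^sub>R y))"
    by (simp add: norm_minus_commute)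
  also have "\<dots> \<le> (1 / 2 ^ Suc n) * ((2 * L) ^ n * \<Phi> x)"
    using defect[of y] pow2_scaleR_le[where g = \<Phi>, OF \<Phi>_double, of n x] L_nonneg
    unfolding y_def by (intro mult_left_mono) auto
  also have "\<dots> = L ^ n * \<Phi> x / 2" by (simp add: power_mult_distrib)
  finally show ?thesis .
qed

lemma hyers_seq_telescope: "hyers_seq f n x = f x + (\<Sum>k<n. hyers_seq f (Suc k) x - hyers_seq f k x)"
  using sum_lessThan_telescope[of "\<lambda>k. hyers_seq f k x" n] by simp

lemma norm_sub_hyers_seq_le: "norm (f x - hyers_seq f n x) \<le> \<Phi> x / (2 - 2 * L)"
proof -
  have "0 \<le> \<Phi> x" using defect[of x] norm_ge_zero order_trans by blast
  have "norm (f x - hyers_seq f n x) = norm (\<Sum>k<n. hyers_seq f (Suc k) x - hyers_seq f k x)"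
    by (subst hyers_seq_telescope) (simp add: norm_minus_commute)
  also have "\<dots> \<le> (\<Sum>k<n. L ^ k * \<Phi> x / 2)"
    by (intro sum_norm_le norm_hyers_seq_Suc_diff_le)
  also have "\<dots> = (\<Sum>k<n. L ^ k) * (\<Phi> x / 2)" by (simp add: sum_distrib_right)
  also have "\<dots> \<le> (\<Sum>k. L ^ k) * (\<Phi> x / 2)"
    using L_nonneg L_less_1 \<open>0 \<le> \<Phi> x\<close>
    by (intro mult_right_mono sum_le_suminf summable_geometric) auto
  also have "\<dots> = \<Phi> x / (2 - 2 * L)"
    using L_nonneg L_less_1 by (simp add: suminf_geometric field_simps)
  finally show ?thesis .
qed

lemma hyers_seq_convergent: "convergent (\<lambda>n. hyers_seq f n x)"
proof -
  have "summable (\<lambda>k. hyers_seq f (Suc k) x - hyers_seq f k x)"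
  proof (rule summable_comparison_test)
    show "\<exists>N. \<forall>n\<ge>N. norm (hyers_seq f (Suc n) x - hyers_seq f n x) \<le> L ^ n * \<Phi> x / 2"
      using norm_hyers_seq_Suc_diff_le by blast
    show "summable (\<lambda>n. L ^ n * \<Phi> x / 2)"
      using L_nonneg L_less_1 by (intro summable_divide summable_mult2 summable_geometric) simp
  qed
  then have "convergent (\<lambda>n. f x + (\<Sum>k<n. hyers_seq f (Suc k) x - hyers_seq f k x))"
    by (intro convergent_add convergent_const summable_iff_convergent[THEN iffD1])
  then show ?thesis by (simp flip: hyers_seq_telescope)
qed

lemma hyers_limit_exists:
  obtains H where "\<And>x. (\<lambda>n. hyers_seq f n x) \<longlonglongrightarrow> H x"
    and "\<And>x. norm (f x - H x) \<le> \<Phi> x / (2 - 2 * L)"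
proof
  fix x
  show lim: "(\<lambda>n. hyers_seq f n x) \<longlonglongrightarrow> lim (\<lambda>n. hyers_seq f n x)"
    using hyers_seq_convergent convergent_LIMSEQ_iff by blast
  have "(\<lambda>n. norm (f x - hyers_seq f n x)) \<longlonglongrightarrow> norm (f x - lim (\<lambda>n. hyers_seq f n x))"
    by (intro tendsto_norm tendsto_diff tendsto_const lim)
  then show "norm (f x - lim (\<lambda>n. hyers_seq f n x)) \<le> \<Phi> x / (2 - 2 * L)"
    using norm_sub_hyers_seq_le by (intro LIMSEQ_le_const2) auto
qed

end

lemma hyers_limit_functional_eq:
  fixes f :: "'a::real_vector \<Rightarrow> 'b::real_normed_vector"
  assumes lim: "\<And>x. (\<lambda>n. hyers_seq f n x) \<longlonglongrightarrow> H x"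
    and ineq: "\<And>x y. norm (f (2 *\<^sub>R x + y) + f (x + 2 *\<^sub>R y) - f (3 *\<^sub>R x) - f (3 *\<^sub>R y)) \<le> \<phi> x y"
    and \<phi>_double: "\<And>x y. \<phi> (2 *\<^sub>R x) (2 *\<^sub>R y) \<le> 2 * L * \<phi> x y"
    and "0 \<le> L" "L < 1"
  shows "H (2 *\<^sub>R a + b) + H (a + 2 *\<^sub>R b) - H (3 *\<^sub>R a) - H (3 *\<^sub>R b) = 0"
proof -
  define E where "E n = hyers_seq f n (2 *\<^sub>R a + b) + hyers_seq f n (a + 2 *\<^sub>R b)
    - hyers_seq f n (3 *\<^sub>R a) - hyers_seq f n (3 *\<^sub>R b)" for n
  have "E \<longlonglongrightarrow> H (2 *\<^sub>R a + b) + H (a + 2 *\<^sub>R b) - H (3 *\<^sub>R a) - H (3 *\<^sub>R b)"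
    unfolding E_def by (intro tendsto_add tendsto_diff lim)
  moreover have "E \<longlonglongrightarrow> 0"
  proof (rule Lim_null_comparison)
    have "norm (E n) \<le> L ^ n * \<phi> a b" for n
    proof -
      define a' b' where "a' = (2::real) ^ n *\<^sub>R a" and "b' = (2::real) ^ n *\<^sub>R b"
      have "E n = (1 / 2 ^ n) *\<^sub>R (f (2 *\<^sub>R a' + b') + f (a' + 2 *\<^sub>R b') - f (3 *\<^sub>R a') - f (3 *\<^sub>R b'))"
        unfolding E_def hyers_seq_def a'_def b'_def by (simp add: algebra_simps)
      then have "norm (E n) = norm (f (2 *\<^sub>R a' + b') + f (a' + 2 *\<^sub>R b') - f (3 *\<^sub>R a') - f (3 *\<^sub>R b')) / 2 ^ n"
        by simp
      also have "\<dots> \<le> (2 * L) ^ n * \<phi> a b / 2 ^ n"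
        using ineq[of a' b'] pow2_scaleR_le[of "case_prod \<phi>" "2 * L" n "(a, b)"] \<phi>_double \<open>0 \<le> L\<close>
        unfolding a'_def b'_def by (intro divide_right_mono) auto
      also have "\<dots> = L ^ n * \<phi> a b" by (simp add: power_mult_distrib)
      finally show ?thesis .
    qed
    then show "\<forall>\<^sub>F n in sequentially. norm (E n) \<le> L ^ n * \<phi> a b" by simp
    show "(\<lambda>n. L ^ n * \<phi> a b) \<longlonglongrightarrow> 0"
      using assms by (intro tendsto_mult_left_zero LIMSEQ_power_zero) auto
  qed
  ultimately show ?thesis using LIMSEQ_unique by blast
qed

lemma hyers_limit_jordan:
  fixes f :: "'a::real_normed_algebra \<Rightarrow> 'a"
  assumes lim: "\<And>x. (\<lambda>n. hyers_seq f n x) \<longlonglongrightarrow> H x"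
    and ineq: "\<And>x y. norm (f (x * y * x) - f x * y * x - x * f y * x - x * y * f x) \<le> \<psi> x y"
    and \<psi>_lim: "(\<lambda>k. \<psi> ((2::real) ^ k *\<^sub>R x) ((2::real) ^ k *\<^sub>R y) / 8 ^ k) \<longlonglongrightarrow> 0"
  shows "H (x * y * x) = H x * y * x + x * H y * x + x * y * H x"
proof -
  text \<open>Scaling \<open>x, y\<close> by \<open>2\<^sup>k\<close> scales \<open>xyx\<close> by \<open>2\<^sup>3\<^sup>k\<close>, so compare with the subsequence \<open>3k\<close> at \<open>xyx\<close>.\<close>
  define J where "J k = hyers_seq f (3 * k) (x * y * x) - hyers_seq f k x * y * x
    - x * hyers_seq f k y * x - x * y * hyers_seq f k x" for k
  have "(\<lambda>k. hyers_seq f (3 * k) (x * y * x)) \<longlonglongrightarrow> H (x * y * x)"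
    using LIMSEQ_subseq_LIMSEQ[OF lim, of "\<lambda>k. 3 * k"] by (simp add: strict_mono_def o_def)
  then have "J \<longlonglongrightarrow> H (x * y * x) - H x * y * x - x * H y * x - x * y * H x"
    unfolding J_def by (intro tendsto_diff tendsto_mult tendsto_const lim)
  moreover have "J \<longlonglongrightarrow> 0"
  proof (rule Lim_null_comparison)
    have "norm (J k) \<le> \<psi> ((2::real) ^ k *\<^sub>R x) ((2::real) ^ k *\<^sub>R y) / 8 ^ k" for k
    proof -
      define X Y where "X = (2::real) ^ k *\<^sub>R x" and "Y = (2::real) ^ k *\<^sub>R y"
      have pow8: "(8::real) ^ k = 2 ^ (3 * k)" "(8::real) ^ k = 2 ^ k * 2 ^ k * 2 ^ k"
        by (simp_all add: power_mult flip: power_mult_distrib)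
      have "X * Y * X = 8 ^ k *\<^sub>R (x * y * x)"
        unfolding X_def Y_def pow8(2) by (simp add: mult_scaleR_left mult_scaleR_right)
      then have "J k = (1 / 8 ^ k) *\<^sub>R (f (X * Y * X) - f X * Y * X - X * f Y * X - X * Y * f X)"
        unfolding J_def hyers_seq_def X_def Y_def pow8(1)[symmetric]
        by (simp add: pow8(2) mult_scaleR_left mult_scaleR_right scaleR_diff_right field_simps)
      then show ?thesis
        using ineq[of X Y] unfolding X_def Y_def by (simp add: divide_right_mono)
    qed
    then show "\<forall>\<^sub>F k in sequentially. norm (J k) \<le> \<psi> ((2::real) ^ k *\<^sub>R x) ((2::real) ^ k *\<^sub>R y) / 8 ^ k"
      by simp
  qed (fact \<psi>_lim)
  ultimately have "H (x * y * x) - H x * y * x - x * H y * x - x * y * H x = 0"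
    using LIMSEQ_unique by blast
  then show ?thesis by (simp add: algebra_simps)
qed

definition stability_control :: "('a::real_vector \<Rightarrow> 'a \<Rightarrow> real) \<Rightarrow> 'a \<Rightarrow> real" where
  "stability_control \<phi> x = \<phi> ((1/2) *\<^sub>R x) 0 + \<phi> (- ((1/2) *\<^sub>R x)) 0
    + \<phi> ((1/2) *\<^sub>R x) (- ((1/2) *\<^sub>R x)) + \<phi> (- ((1/3) *\<^sub>R x)) ((2/3) *\<^sub>R x)"

lemma stability_control_double_le:
  assumes "\<And>x y. \<phi> (2 *\<^sub>R x) (2 *\<^sub>R y) \<le> c * \<phi> x y"
  shows "stability_control \<phi> (2 *\<^sub>R x) \<le> c * stability_control \<phi> x"
proof -
  have "stability_control \<phi> (2 *\<^sub>R x) = \<phi> (2 *\<^sub>R ((1/2) *\<^sub>R x)) (2 *\<^sub>R 0)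
    + \<phi> (2 *\<^sub>R (- ((1/2) *\<^sub>R x))) (2 *\<^sub>R 0)
    + \<phi> (2 *\<^sub>R ((1/2) *\<^sub>R x)) (2 *\<^sub>R (- ((1/2) *\<^sub>R x)))
    + \<phi> (2 *\<^sub>R (- ((1/3) *\<^sub>R x))) (2 *\<^sub>R ((2/3) *\<^sub>R x))"
    by (simp add: stability_control_def)
  also have "\<dots> \<le> c * stability_control \<phi> x"
    using assms[of "(1/2) *\<^sub>R x" 0] assms[of "- ((1/2) *\<^sub>R x)" 0]
      assms[of "(1/2) *\<^sub>R x" "- ((1/2) *\<^sub>R x)"] assms[of "- ((1/3) *\<^sub>R x)" "(2/3) *\<^sub>R x"]
    unfolding stability_control_def by argo
  finally show ?thesis .
qed

lemma norm_doubling_defect_le: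
  fixes f :: "'a::real_vector \<Rightarrow> 'b::real_normed_vector"
  assumes f0: "f 0 = 0"
    and ineq: "\<And>x y. norm (f (2 *\<^sub>R x + y) + f (x + 2 *\<^sub>R y) - f (3 *\<^sub>R x) - f (3 *\<^sub>R y)) \<le> \<phi> x y"
  shows "norm (2 *\<^sub>R f x - f (2 *\<^sub>R x)) \<le> stability_control \<phi> x"
proof -
  let ?h = "(1/2) *\<^sub>R x" and ?t = "(1/3) *\<^sub>R x"
  have args: "2 *\<^sub>R ?h + - ?h = ?h" "?h + 2 *\<^sub>R (- ?h) = - ?h" "3 *\<^sub>R ?h = (3/2) *\<^sub>R x"
    "2 *\<^sub>R (- ?t) + (2/3) *\<^sub>R x = 0" "- ?t + 2 *\<^sub>R ((2/3) *\<^sub>R x) = x"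
    "3 *\<^sub>R (- ?t) = - x" "3 *\<^sub>R ((2/3) *\<^sub>R x) = 2 *\<^sub>R x"
    by (simp_all only: scaleR_scaleR scaleR_minus_right flip: scaleR_add_left scaleR_minus_left) simp_all
  have "norm (f x + f ?h - f ((3/2) *\<^sub>R x)) \<le> \<phi> ?h 0"
    and "norm (f (- x) + f (- ?h) - f (- ((3/2) *\<^sub>R x))) \<le> \<phi> (- ?h) 0"
    and "norm (f ?h + f (- ?h) - f ((3/2) *\<^sub>R x) - f (- ((3/2) *\<^sub>R x))) \<le> \<phi> ?h (- ?h)"
    and "norm (f x - f (- x) - f (2 *\<^sub>R x)) \<le> \<phi> (- ?t) ((2/3) *\<^sub>R x)"
    using ineq[of ?h 0] ineq[of "- ?h" 0] ineq[of ?h "- ?h"] ineq[of "- ?t" "(2/3) *\<^sub>R x"]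
    unfolding args by (simp_all add: f0 algebra_simps)
  moreover have "2 *\<^sub>R f x - f (2 *\<^sub>R x) = (f x + f ?h - f ((3/2) *\<^sub>R x))
    + (f (- x) + f (- ?h) - f (- ((3/2) *\<^sub>R x)))
    - (f ?h + f (- ?h) - f ((3/2) *\<^sub>R x) - f (- ((3/2) *\<^sub>R x)))
    + (f x - f (- x) - f (2 *\<^sub>R x))"
    by (simp add: algebra_simps scaleR_2)
  ultimately show ?thesis
    unfolding stability_control_def
    by (smt (verit) norm_triangle_ineq norm_triangle_ineq4)
qed

theorem theorem2p6:
  fixes f :: "'a::{banach, real_normed_algebra} \<Rightarrow> 'a"
    and \<phi> \<psi> :: "'a \<Rightarrow> 'a \<Rightarrow> real"
    and L :: real
  assumes phi_nonneg: "\<And>x y. \<phi> x y \<ge> 0"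
    and psi_nonneg: "\<And>x y. \<psi> x y \<ge> 0"
    and f0: "f 0 = 0"
    and h_psi: "\<And>x y. norm (f (x * y * x) - f x * y * x - x * f y * x - x * y * f x) \<le> \<psi> x y"
    and h_phi: "\<And>x y. norm (f (2 *\<^sub>R x + y) + f (x + 2 *\<^sub>R y) - f (3 *\<^sub>R x) - f (3 *\<^sub>R y)) \<le> \<phi> x y"
    and L_pos: "0 < L" and L_lt1: "L < 1"
    and h_L: "\<And>x y. (1/2) * \<phi> (2 *\<^sub>R x) (2 *\<^sub>R y) \<le> L * \<phi> x y"
    and h_lim: "\<And>x y. (\<lambda>k. \<psi> ((2::real) ^ k *\<^sub>R x) ((2::real) ^ k *\<^sub>R y) / 8 ^ k) \<longlonglongrightarrow> 0"
  shows "\<exists>!H. jordan_triple_derivation H \<and>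
           (\<forall>x. norm (f x - H x) \<le> 1 / (2 - 2 * L) *
              (\<phi> ((1/2) *\<^sub>R x) 0 + \<phi> (- ((1/2) *\<^sub>R x)) 0
               + \<phi> ((1/2) *\<^sub>R x) (- ((1/2) *\<^sub>R x))
               + \<phi> (- ((1/3) *\<^sub>R x)) ((2/3) *\<^sub>R x)))"
proof -
  let ?\<Phi> = "stability_control \<phi>"
  have L: "0 \<le> L" "L < 1" using L_pos L_lt1 by simp_all
  have \<phi>_double: "\<phi> (2 *\<^sub>R x) (2 *\<^sub>R y) \<le> 2 * L * \<phi> x y" for x y
    using h_L[of x y] by simp
  have \<Phi>_double: "?\<Phi> (2 *\<^sub>R x) \<le> 2 * L * ?\<Phi> x" for x
    by (rule stability_control_double_le[where \<phi> = \<phi>, OF \<phi>_double])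
  have defect: "norm (2 *\<^sub>R f x - f (2 *\<^sub>R x)) \<le> ?\<Phi> x" for x
    by (rule norm_doubling_defect_le[OF f0 h_phi])
  obtain H where lim: "\<And>x. (\<lambda>n. hyers_seq f n x) \<longlonglongrightarrow> H x"
    and close: "\<And>x. norm (f x - H x) \<le> ?\<Phi> x / (2 - 2 * L)"
    using hyers_limit_exists[of f ?\<Phi> L, OF defect \<Phi>_double L] by blast
  have "additive_map H"
    using additive_map_if_functional_eq[OF hyers_limit_double[OF lim]
        hyers_limit_functional_eq[OF lim h_phi \<phi>_double L]] .
  then have jordan: "jordan_triple_derivation H"
    unfolding jordan_triple_derivation_def using hyers_limit_jordan[OF lim h_psi h_lim] by blast
  have unique: "G = H"
    if "jordan_triple_derivation G \<and> (\<forall>x. norm (f x - G x) \<le> 1 / (2 - 2 * L) * ?\<Phi> x)" for G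
  proof (rule additive_maps_eq_if_near)
    show "additive_map G" "\<And>x. norm (f x - G x) \<le> ?\<Phi> x / (2 - 2 * L)"
      using that by (simp_all add: jordan_triple_derivation_def)
    show "?\<Phi> (2 *\<^sub>R x) / (2 - 2 * L) \<le> 2 * L * (?\<Phi> x / (2 - 2 * L))" for x
      using \<Phi>_double[of x] L by (simp add: divide_right_mono)
  qed (use \<open>additive_map H\<close> close L in auto)
  show ?thesis
    using jordan close unique unfolding stability_control_def by (intro ex1I[of _ H]) auto
qed

end
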